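(* For any group $\Gamma$ we have $\displaystyle r(\Gamma)=-\inf_S\frac{\ln\rho(\Gamma,S)}{\ln|S|}$, where the infimum runs over all finite symmetric subsets $S\subseteq\Gamma$ with $|S|\ge 2$.
   Context: For finite symmetric $S\subseteq\Gamma$, $\rho(\Gamma,S)$ is the operator norm on $\ell^2(\Gamma)$ of the Markov operator $M_S=\frac1{|S|}\mathbf{1}_S$ acting by left convolution. $r(\Gamma)=-\liminf_S\frac{\ln\rho(\Gamma,S)}{\ln|S|}$, the liminf over the directed set of finite symmetric subsets ordered by inclusion ($\liminf_Sf(S)=\sup_S\inf_{S'\supseteq S}f(S')$). *)

theory Defs
  imports "HOL-Analysis.Analysis"
begin

text \<open>The group \<Gamma> is a type of class group_add (written additively; not
  assumed commutative). Functions in l2(\<Gamma>) are complex valued.\<close>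

definition finite_symmetric :: "'a::group_add set \<Rightarrow> bool" where
  "finite_symmetric S \<longleftrightarrow> finite S \<and> uminus ` S = S"

definition in_l2 :: "('a \<Rightarrow> complex) \<Rightarrow> bool" where
  "in_l2 f \<longleftrightarrow> (\<lambda>x. (cmod (f x))\<^sup>2) summable_on UNIV"

definition l2_norm :: "('a \<Rightarrow> complex) \<Rightarrow> real" where
  "l2_norm f = sqrt (\<Sum>\<^sub>\<infinity>x\<in>UNIV. (cmod (f x))\<^sup>2)"

text \<open>Markov operator M_S = (1/|S|) 1_S acting by left convolution:
  (1_S * f)(x) = sum over s in S of f(s^{-1} x).\<close>
definition markov_op :: "'a::group_add set \<Rightarrow> ('a \<Rightarrow> complex) \<Rightarrow> ('a \<Rightarrow> complex)" where
  "markov_op S f = (\<lambda>x. (1 / of_nat (card S)) * (\<Sum>s\<in>S. f ((- s) + x)))"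

definition spec_rho :: "'a::group_add set \<Rightarrow> real" where
  "spec_rho S = Sup {l2_norm (markov_op S f) | f. in_l2 f \<and> l2_norm f \<le> 1}"

definition rho_exponent_fun :: "'a::group_add set \<Rightarrow> real" where
  "rho_exponent_fun S = ln (spec_rho S) / ln (real (card S))"

text \<open>r(\<Gamma>) = - liminf_S ln rho(\<Gamma>,S) / ln |S|, liminf over the directed set of
  finite symmetric subsets ordered by inclusion: liminf_S f(S) = sup_S inf_{S' \<supseteq> S} f(S').\<close>
definition r_Gamma :: "'a::group_add itself \<Rightarrow> real" where
  "r_Gamma _ = - (SUP S \<in> {S::'a set. finite_symmetric S}.
                    INF S' \<in> {S'. finite_symmetric S' \<and> S \<subseteq> S'}. rho_exponent_fun S')"

end

theory Submission
  imports Defs "HOL-Real_Asymp.Real_Asymp"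
begin

text \<open>Every ratio ln \<rho>(S) / ln |S| lies in [-1/2, 0], so the liminf over the directed set is at
  least the infimum as soon as the supersets considered have two elements. Conversely, every
  finite symmetric T is matched, up to \<epsilon>, by supersets of any given finite symmetric S:
  pick a dyadic level set L of the n-step distribution of the random walk driven by T that
  carries mass at least 1/(n|T| + 1), say with probabilities above t. Comparing the indicator
  of L with t\<inverse> M_T^n \<delta>_0 gives sqrt |L| \<le> \<rho>(T)^n / t, and M_(L \<union> S) is dominated by
  (t\<inverse> M_T^n + |S| M_S) / |L \<union> S| on moduli, whence \<rho>(L \<union> S) \<le> poly(n) \<rho>(T)^n while
  |L \<union> S| \<le> (|S| + 1) |T|^n. Taking logarithms and letting n \<rightarrow> \<infinity> recovers the ratio of T.\<close>

subsection \<open>Square-summable functions\<close>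

lemma L2_set_le_l2_norm:
  assumes "in_l2 f" "finite F"
  shows "L2_set (\<lambda>x. cmod (f x)) F \<le> l2_norm f"
proof -
  have "(\<Sum>x\<in>F. (cmod (f x))\<^sup>2) \<le> (\<Sum>\<^sub>\<infinity>x\<in>UNIV. (cmod (f x))\<^sup>2)"
    using assms by (intro finite_sum_le_infsum) (auto simp: in_l2_def)
  then show ?thesis unfolding L2_set_def l2_norm_def by simp
qed

lemma l2_norm_le_if_L2_set_le:
  assumes "\<And>F. finite F \<Longrightarrow> L2_set (\<lambda>x. cmod (h x)) F \<le> B"
  shows "in_l2 h \<and> l2_norm h \<le> B"
proof -
  have B: "0 \<le> B" using assms[of "{}"] by simp
  have finite_sums: "(\<Sum>x\<in>F. (cmod (h x))\<^sup>2) \<le> B\<^sup>2" if "finite F" for F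
  proof -
    have "sqrt (\<Sum>x\<in>F. (cmod (h x))\<^sup>2) \<le> B" using assms[OF that] by (simp add: L2_set_def)
    then show ?thesis using B by (metis real_le_rsqrt sqrt_le_D)
  qed
  have summable: "in_l2 h" unfolding in_l2_def
    by (rule nonneg_bdd_above_summable_on) (auto intro!: bdd_aboveI[where M="B\<^sup>2"] finite_sums)
  have "(\<Sum>\<^sub>\<infinity>x\<in>UNIV. (cmod (h x))\<^sup>2) \<le> B\<^sup>2"
    using summable by (intro infsum_le_finite_sums) (auto simp: in_l2_def finite_sums)
  then have "l2_norm h \<le> sqrt (B\<^sup>2)" unfolding l2_norm_def by (rule real_sqrt_le_mono)
  with B summable show ?thesis by simp
qed

lemma L2_set_sum_le:
  assumes "finite I"
  shows "L2_set (\<lambda>x. \<Sum>i\<in>I. g i x) F \<le> (\<Sum>i\<in>I. L2_set (g i) F)"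
  using assms
proof (induction I rule: finite_induct)
  case empty
  then show ?case by (simp add: L2_set_def)
next
  case (insert a I)
  have "L2_set (\<lambda>x. \<Sum>i\<in>insert a I. g i x) F = L2_set (\<lambda>x. g a x + (\<Sum>i\<in>I. g i x)) F"
    using insert by simp
  also have "\<dots> \<le> L2_set (g a) F + L2_set (\<lambda>x. \<Sum>i\<in>I. g i x) F"
    by (rule L2_set_triangle_ineq)
  also have "\<dots> \<le> L2_set (g a) F + (\<Sum>i\<in>I. L2_set (g i) F)"
    using insert by simp
  finally show ?case using insert by simp
qed

lemma l2_norm_le_sum_if_dominated:
  fixes G :: "'i \<Rightarrow> 'a \<Rightarrow> complex"
  assumes "finite I" "\<And>i. i \<in> I \<Longrightarrow> in_l2 (G i)" "\<And>i. i \<in> I \<Longrightarrow> 0 \<le> c i"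
    and "\<And>x. cmod (H x) \<le> (\<Sum>i\<in>I. c i * cmod (G i x))"
  shows "in_l2 H \<and> l2_norm H \<le> (\<Sum>i\<in>I. c i * l2_norm (G i))"
proof (rule l2_norm_le_if_L2_set_le)
  fix F :: "'a set" assume F: "finite F"
  have "L2_set (\<lambda>x. cmod (H x)) F \<le> L2_set (\<lambda>x. \<Sum>i\<in>I. c i * cmod (G i x)) F"
    by (rule L2_set_mono) (use assms(4) in auto)
  also have "\<dots> \<le> (\<Sum>i\<in>I. L2_set (\<lambda>x. c i * cmod (G i x)) F)"
    by (rule L2_set_sum_le[OF assms(1)])
  also have "\<dots> = (\<Sum>i\<in>I. c i * L2_set (\<lambda>x. cmod (G i x)) F)"
    by (rule sum.cong) (use assms(3) L2_set_right_distrib in metis)+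
  also have "\<dots> \<le> (\<Sum>i\<in>I. c i * l2_norm (G i))"
    by (rule sum_mono) (use assms(2,3) L2_set_le_l2_norm F in \<open>blast intro: mult_left_mono\<close>)
  finally show "L2_set (\<lambda>x. cmod (H x)) F \<le> (\<Sum>i\<in>I. c i * l2_norm (G i))" .
qed

lemma l2_norm_le_if_dominated:
  assumes "in_l2 G" "0 \<le> c" "\<And>x. cmod (H x) \<le> c * cmod (G x)"
  shows "in_l2 H \<and> l2_norm H \<le> c * l2_norm G"
  using l2_norm_le_sum_if_dominated[of "{()}" "\<lambda>_. G" "\<lambda>_. c" H] assms by auto

lemma l2_norm_le_if_dominated2:
  assumes "in_l2 G\<^sub>1" "in_l2 G\<^sub>2" "0 \<le> c\<^sub>1" "0 \<le> c\<^sub>2"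
    and "\<And>x. cmod (H x) \<le> c\<^sub>1 * cmod (G\<^sub>1 x) + c\<^sub>2 * cmod (G\<^sub>2 x)"
  shows "in_l2 H \<and> l2_norm H \<le> c\<^sub>1 * l2_norm G\<^sub>1 + c\<^sub>2 * l2_norm G\<^sub>2"
  using l2_norm_le_sum_if_dominated[of UNIV "\<lambda>b. if b then G\<^sub>1 else G\<^sub>2" "\<lambda>b. if b then c\<^sub>1 else c\<^sub>2" H]
    assms by (simp add: UNIV_bool add.commute)

lemma l2_norm_translate_le:
  fixes f :: "'a::group_add \<Rightarrow> complex"
  assumes "in_l2 f"
  shows "in_l2 (\<lambda>x. f (v + x)) \<and> l2_norm (\<lambda>x. f (v + x)) \<le> l2_norm f"
proof (rule l2_norm_le_if_L2_set_le)
  fix F :: "'a set" assume F: "finite F"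
  have inj: "inj_on (\<lambda>x. v + x) F" by (auto simp: inj_on_def)
  have "L2_set (\<lambda>x. cmod (f (v + x))) F = L2_set (\<lambda>x. cmod (f x)) ((\<lambda>x. v + x) ` F)"
    unfolding L2_set_def by (simp add: sum.reindex[OF inj])
  also have "\<dots> \<le> l2_norm f" using L2_set_le_l2_norm[OF assms] F by simp
  finally show "L2_set (\<lambda>x. cmod (f (v + x))) F \<le> l2_norm f" .
qed

lemma in_l2_zero [simp]: "in_l2 (\<lambda>x. 0)"
  by (simp add: in_l2_def)

lemma l2_norm_zero [simp]: "l2_norm (\<lambda>x. 0) = 0"
  by (simp add: l2_norm_def)

lemma l2_norm_nonneg: "0 \<le> l2_norm f"
  by (simp add: l2_norm_def infsum_nonneg)

lemma sqrt_card_mult_le_l2_norm: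
  assumes "finite L" "in_l2 h" "\<And>x. x \<in> L \<Longrightarrow> cmod (h x) = c"
  shows "sqrt (real (card L)) * \<bar>c\<bar> \<le> l2_norm h"
proof -
  have "L2_set (\<lambda>x. cmod (h x)) L = L2_set (\<lambda>x. c) L"
    by (rule L2_set_cong) (use assms in auto)
  also have "\<dots> = sqrt (real (card L)) * \<bar>c\<bar>" by (rule L2_set_constant)
  finally show ?thesis using L2_set_le_l2_norm[OF assms(2,1)] by simp
qed

lemma l2_norm_indicator_zero:
  "in_l2 (indicator {0} :: 'a::zero \<Rightarrow> complex) \<and> l2_norm (indicator {0} :: 'a \<Rightarrow> complex) \<le> 1"
proof (rule l2_norm_le_if_L2_set_le)
  fix F :: "'a set" assume F: "finite F"
  have "L2_set (\<lambda>x. cmod (indicator {0} x :: complex)) F \<le> (\<Sum>x\<in>F. cmod (indicator {0} x :: complex))"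
    by (rule L2_set_le_sum) simp
  also have "\<dots> = (\<Sum>x\<in>F. if x = 0 then 1 else 0)"
    by (rule sum.cong) (auto simp: indicator_def)
  also have "\<dots> \<le> 1" using F by (simp add: sum.delta)
  finally show "L2_set (\<lambda>x. cmod (indicator {0} x :: complex)) F \<le> 1" .
qed

definition abs_fun :: "('a \<Rightarrow> complex) \<Rightarrow> 'a \<Rightarrow> complex" where
  "abs_fun f x = complex_of_real (cmod (f x))"

lemma abs_fun_indicator [simp]: "abs_fun (indicator A) = indicator A"
  by (auto simp: abs_fun_def indicator_def)

lemma l2_norm_abs_fun_le: "in_l2 f \<Longrightarrow> in_l2 (abs_fun f) \<and> l2_norm (abs_fun f) \<le> l2_norm f"
  using l2_norm_le_if_dominated[of f 1 "abs_fun f"] by (simp add: abs_fun_def)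

subsection \<open>Operator norms on square-summable functions\<close>

definition l2_bounded :: "(('a \<Rightarrow> complex) \<Rightarrow> ('a \<Rightarrow> complex)) \<Rightarrow> real \<Rightarrow> bool" where
  "l2_bounded A c \<longleftrightarrow> (\<forall>f. in_l2 f \<longrightarrow> in_l2 (A f) \<and> l2_norm (A f) \<le> c * l2_norm f)"

definition l2_opnorm :: "(('a \<Rightarrow> complex) \<Rightarrow> ('a \<Rightarrow> complex)) \<Rightarrow> real" where
  "l2_opnorm A = Sup {l2_norm (A f) | f. in_l2 f \<and> l2_norm f \<le> 1}"

lemma spec_rho_eq_l2_opnorm: "spec_rho S = l2_opnorm (markov_op S)"
  by (simp add: spec_rho_def l2_opnorm_def)

lemma l2_boundedD: "l2_bounded A c \<Longrightarrow> in_l2 f \<Longrightarrow> in_l2 (A f) \<and> l2_norm (A f) \<le> c * l2_norm f"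
  by (simp add: l2_bounded_def)

lemma l2_bounded_id: "l2_bounded (\<lambda>f. f) 1"
  by (simp add: l2_bounded_def)

lemma l2_bounded_comp:
  fixes A B :: "('a \<Rightarrow> complex) \<Rightarrow> ('a \<Rightarrow> complex)"
  assumes "l2_bounded A c" "l2_bounded B d" "0 \<le> c"
  shows "l2_bounded (A \<circ> B) (c * d)"
  unfolding l2_bounded_def
proof (intro allI impI conjI)
  fix f :: "'a \<Rightarrow> complex" assume f: "in_l2 f"
  have B: "in_l2 (B f)" "l2_norm (B f) \<le> d * l2_norm f" using l2_boundedD[OF assms(2) f] by auto
  show "in_l2 ((A \<circ> B) f)" using l2_boundedD[OF assms(1) B(1)] by simp
  have "l2_norm ((A \<circ> B) f) \<le> c * l2_norm (B f)" using l2_boundedD[OF assms(1) B(1)] by simp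
  also have "\<dots> \<le> c * (d * l2_norm f)" by (rule mult_left_mono[OF B(2) assms(3)])
  finally show "l2_norm ((A \<circ> B) f) \<le> c * d * l2_norm f" by simp
qed

lemma l2_norm_le_l2_opnorm:
  assumes "l2_bounded A c" "in_l2 f" "l2_norm f \<le> 1"
  shows "l2_norm (A f) \<le> l2_opnorm A"
  unfolding l2_opnorm_def
proof (rule cSup_upper)
  show "bdd_above {l2_norm (A f) | f. in_l2 f \<and> l2_norm f \<le> 1}"
  proof (rule bdd_aboveI[where M="\<bar>c\<bar>"])
    fix y assume "y \<in> {l2_norm (A f) | f. in_l2 f \<and> l2_norm f \<le> 1}"
    then obtain g where g: "in_l2 g" "l2_norm g \<le> 1" "y = l2_norm (A g)" by blast
    have "y \<le> c * l2_norm g" using l2_boundedD[OF assms(1) g(1)] g(3) by simp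
    also have "\<dots> \<le> \<bar>c\<bar> * l2_norm g" by (simp add: l2_norm_nonneg mult_right_mono)
    also have "\<dots> \<le> \<bar>c\<bar>" using g(2) by (simp add: mult_left_le)
    finally show "y \<le> \<bar>c\<bar>" .
  qed
qed (use assms in auto)

lemma l2_opnorm_nonneg: "l2_bounded A c \<Longrightarrow> 0 \<le> l2_opnorm A"
  using l2_norm_le_l2_opnorm[of A c "\<lambda>x. 0"] l2_norm_nonneg[of "A (\<lambda>x. 0)"] by simp

lemma l2_opnorm_le:
  fixes A :: "('a \<Rightarrow> complex) \<Rightarrow> ('a \<Rightarrow> complex)"
  assumes "l2_bounded A c" "0 \<le> c"
  shows "l2_opnorm A \<le> c"
  unfolding l2_opnorm_def
proof (rule cSup_least)
  show "{l2_norm (A f) | f. in_l2 f \<and> l2_norm f \<le> 1} \<noteq> {}"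
    using in_l2_zero l2_norm_zero by fastforce
next
  fix y assume "y \<in> {l2_norm (A f) | f. in_l2 f \<and> l2_norm f \<le> 1}"
  then obtain f where f: "in_l2 f" "l2_norm f \<le> 1" "y = l2_norm (A f)" by blast
  have "y \<le> c * l2_norm f" using l2_boundedD[OF assms(1) f(1)] f(3) by simp
  also have "\<dots> \<le> c" using f(2) assms(2) by (simp add: mult_left_le)
  finally show "y \<le> c" .
qed

lemma l2_bounded_l2_opnorm:
  fixes A :: "('a \<Rightarrow> complex) \<Rightarrow> ('a \<Rightarrow> complex)"
  assumes homogeneous: "\<And>c f. A (\<lambda>x. complex_of_real c * f x) = (\<lambda>x. complex_of_real c * A f x)"
    and bounded: "l2_bounded A c"
  shows "l2_bounded A (l2_opnorm A)"
  unfolding l2_bounded_def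
proof (intro allI impI conjI)
  fix f :: "'a \<Rightarrow> complex" assume f: "in_l2 f"
  then show "in_l2 (A f)" using l2_boundedD[OF bounded] by blast
  define r where "r = l2_norm f"
  define N where "N = l2_opnorm A"
  have r: "0 \<le> r" by (simp add: r_def l2_norm_nonneg)
  have N: "0 \<le> N" using l2_opnorm_nonneg[OF bounded] by (simp add: N_def)
  have scaled: "l2_norm (A f) \<le> N / a" if a: "0 < a" "a * r \<le> 1" for a
  proof -
    define g where "g = (\<lambda>x. complex_of_real a * f x)"
    have g: "in_l2 g \<and> l2_norm g \<le> a * r"
      unfolding g_def r_def by (rule l2_norm_le_if_dominated[OF f]) (use a in \<open>auto simp: norm_mult\<close>)
    then have Ag: "in_l2 (A g)" "l2_norm (A g) \<le> N"
      using l2_boundedD[OF bounded] l2_norm_le_l2_opnorm[OF bounded] a(2) unfolding N_def by force+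
    have "cmod (A f x) \<le> 1 / a * cmod (A g x)" for x
      using a(1) by (simp add: g_def homogeneous norm_mult)
    then have "l2_norm (A f) \<le> 1 / a * l2_norm (A g)"
      using l2_norm_le_if_dominated[OF Ag(1), of "1 / a"] a(1) by simp
    also have "\<dots> \<le> N / a" using Ag(2) a(1) by (simp add: divide_right_mono)
    finally show ?thesis .
  qed
  have "l2_norm (A f) \<le> r * N + e" if e: "0 < e" for e
  proof -
    \<comment> \<open>rescale f by 1 / (r + d); the slack d > 0 covers the case r = 0\<close>
    define d where "d = e / (N + 1)"
    have d: "0 < d" using e N by (simp add: d_def)
    have "l2_norm (A f) \<le> N / (1 / (r + d))" using scaled[of "1 / (r + d)"] r d by simp
    also have "\<dots> = r * N + e * (N / (N + 1))" using N by (simp add: d_def field_simps)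
    also have "\<dots> \<le> r * N + e * 1" using N e by (intro add_left_mono mult_left_mono) auto
    finally show ?thesis by simp
  qed
  then have "l2_norm (A f) \<le> r * N" by (rule field_le_epsilon)
  then show "l2_norm (A f) \<le> l2_opnorm A * l2_norm f" by (simp add: N_def r_def mult.commute)
qed

subsection \<open>The Markov operator\<close>

lemma markov_op_scale:
  "markov_op S (\<lambda>x. complex_of_real c * f x) = (\<lambda>x. complex_of_real c * markov_op S f x)"
  unfolding markov_op_def by (auto simp: sum_distrib_left mult_ac)

lemma norm_markov_op_le:
  "cmod (markov_op S f x) \<le> (\<Sum>s\<in>S. cmod (f (- s + x))) / real (card S)"
proof -
  have "cmod (markov_op S f x) = cmod (\<Sum>s\<in>S. f (- s + x)) / real (card S)"
    unfolding markov_op_def by (simp add: norm_mult norm_divide)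
  also have "\<dots> \<le> (\<Sum>s\<in>S. cmod (f (- s + x))) / real (card S)"
    by (intro divide_right_mono norm_sum) simp
  finally show ?thesis .
qed

lemma norm_markov_op_abs_fun:
  "cmod (markov_op S (abs_fun f) x) = (\<Sum>s\<in>S. cmod (f (- s + x))) / real (card S)"
proof -
  have "markov_op S (abs_fun f) x = complex_of_real ((\<Sum>s\<in>S. cmod (f (- s + x))) / real (card S))"
    unfolding markov_op_def abs_fun_def by simp
  then show ?thesis by (simp only: norm_of_real) (simp add: sum_nonneg)
qed

lemma sum_translated_indicator_zero:
  fixes S :: "'a::group_add set"
  assumes "finite S"
  shows "(\<Sum>s\<in>S. indicator {0} (- s + x) :: complex) = indicator S x"
proof -
  have "(\<Sum>s\<in>S. indicator {0} (- s + x) :: complex) = (\<Sum>s\<in>S. if s = x then 1 else 0)"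
    by (rule sum.cong) (auto simp: indicator_def dest: sym minus_unique)
  then show ?thesis using assms by (simp add: sum.delta' indicator_def)
qed

lemma l2_bounded_markov_op_1:
  fixes S :: "'a::group_add set"
  assumes "finite S"
  shows "l2_bounded (markov_op S) 1"
  unfolding l2_bounded_def
proof (intro allI impI)
  fix f :: "'a \<Rightarrow> complex" assume f: "in_l2 f"
  define m where "m = real (card S)"
  have "in_l2 (markov_op S f) \<and> l2_norm (markov_op S f) \<le> (\<Sum>s\<in>S. 1 / m * l2_norm (\<lambda>x. f (- s + x)))"
  proof (rule l2_norm_le_sum_if_dominated[OF assms])
    show "in_l2 (\<lambda>x. f (- s + x))" for s using l2_norm_translate_le[OF f] by blast
    show "cmod (markov_op S f x) \<le> (\<Sum>s\<in>S. 1 / m * cmod (f (- s + x)))" for x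
      using norm_markov_op_le[of S f x] by (simp add: m_def sum_divide_distrib)
  qed (simp add: m_def)
  moreover have "(\<Sum>s\<in>S. 1 / m * l2_norm (\<lambda>x. f (- s + x))) \<le> (\<Sum>s\<in>S. 1 / m * l2_norm f)"
    using l2_norm_translate_le[OF f] by (intro sum_mono mult_left_mono) (auto simp: m_def)
  moreover have "(\<Sum>s\<in>S. 1 / m * l2_norm f) \<le> l2_norm f"
    using l2_norm_nonneg[of f] by (simp add: m_def)
  ultimately show "in_l2 (markov_op S f) \<and> l2_norm (markov_op S f) \<le> 1 * l2_norm f"
    by simp
qed

lemma l2_bounded_markov_op:
  fixes S :: "'a::group_add set"
  assumes "finite S"
  shows "l2_bounded (markov_op S) (spec_rho S)"
  unfolding spec_rho_eq_l2_opnorm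
  by (rule l2_bounded_l2_opnorm[OF markov_op_scale l2_bounded_markov_op_1[OF assms]])

lemma spec_rho_nonneg: "finite S \<Longrightarrow> 0 \<le> spec_rho S"
  unfolding spec_rho_eq_l2_opnorm by (rule l2_opnorm_nonneg[OF l2_bounded_markov_op_1])

lemma spec_rho_le_1: "finite S \<Longrightarrow> spec_rho S \<le> 1"
  unfolding spec_rho_eq_l2_opnorm by (rule l2_opnorm_le[OF l2_bounded_markov_op_1]) simp_all

text \<open>Testing on the unit mass at 0, whose image is the normalised indicator of S.\<close>
lemma spec_rho_ge_inverse_sqrt_card:
  fixes S :: "'a::group_add set"
  assumes "finite S" "S \<noteq> {}"
  shows "1 / sqrt (real (card S)) \<le> spec_rho S"
proof -
  define m where "m = real (card S)"
  have m: "0 < m" using assms by (simp add: m_def card_gt_0_iff)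
  have image: "markov_op S (indicator {0}) x = indicator S x / of_nat (card S)" for x
    unfolding markov_op_def using sum_translated_indicator_zero[OF assms(1)] by simp
  have bounded: "l2_bounded (markov_op S) 1" by (rule l2_bounded_markov_op_1[OF assms(1)])
  have "in_l2 (markov_op S (indicator {0}))"
    using l2_boundedD[OF bounded] l2_norm_indicator_zero by blast
  then have "sqrt m * \<bar>1 / m\<bar> \<le> l2_norm (markov_op S (indicator {0}))"
    unfolding m_def by (rule sqrt_card_mult_le_l2_norm[OF assms(1)]) (simp add: image norm_divide)
  also have "\<dots> \<le> spec_rho S"
    unfolding spec_rho_eq_l2_opnorm using l2_norm_le_l2_opnorm[OF bounded] l2_norm_indicator_zero by blast
  also have "sqrt m * \<bar>1 / m\<bar> = 1 / sqrt m"
  proof -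
    have "sqrt m * sqrt m = m" using m by simp
    then show ?thesis using m by (simp add: field_simps)
  qed
  finally show ?thesis by (simp add: m_def)
qed

lemma spec_rho_pos:
  fixes S :: "'a::group_add set"
  assumes "finite S" "S \<noteq> {}"
  shows "0 < spec_rho S"
proof -
  have "0 < 1 / sqrt (real (card S))" using assms by (simp add: card_gt_0_iff)
  then show ?thesis using spec_rho_ge_inverse_sqrt_card[OF assms] by linarith
qed

text \<open>For card S < 2 the logarithm in the denominator vanishes, and division by 0 gives 0.\<close>
lemma rho_exponent_fun_bounds:
  fixes S :: "'a::group_add set"
  assumes "finite S"
  shows "- 1/2 \<le> rho_exponent_fun S \<and> rho_exponent_fun S \<le> 0"
proof (cases "2 \<le> card S")
  case False
  then have "ln (real (card S)) = 0" by (cases "card S") (auto simp: le_Suc_eq)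
  then show ?thesis by (simp add: rho_exponent_fun_def)
next
  case True
  define m where "m = real (card S)"
  have lm: "0 < ln m" using True by (simp add: m_def)
  have ne: "S \<noteq> {}" using True by auto
  have low: "1 / sqrt m \<le> spec_rho S"
    unfolding m_def by (rule spec_rho_ge_inverse_sqrt_card[OF assms ne])
  have "- (1/2) * ln m = ln (1 / sqrt m)" using True by (simp add: m_def ln_div ln_sqrt)
  also have "\<dots> \<le> ln (spec_rho S)" using low True spec_rho_pos[OF assms ne]
    by (subst ln_le_cancel_iff) (auto simp: m_def)
  finally have "- 1/2 \<le> ln (spec_rho S) / ln m" using lm by (simp add: le_divide_eq)
  moreover have "ln (spec_rho S) \<le> 0"
    using spec_rho_le_1[OF assms] spec_rho_pos[OF assms ne] by simp
  ultimately show ?thesis using lm by (simp add: rho_exponent_fun_def m_def divide_nonpos_pos)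
qed

lemma l2_bounded_markov_op_power:
  fixes T :: "'a::group_add set"
  assumes "finite T"
  shows "l2_bounded (markov_op T ^^ n) (spec_rho T ^ n)"
proof (induction n)
  case 0
  then show ?case using l2_bounded_id by (simp add: id_def)
next
  case (Suc n)
  have "l2_bounded (markov_op T \<circ> (markov_op T ^^ n)) (spec_rho T * spec_rho T ^ n)"
    by (rule l2_bounded_comp[OF l2_bounded_markov_op[OF assms] Suc spec_rho_nonneg[OF assms]])
  then show ?case by (simp add: o_def)
qed

subsection \<open>The distribution of the random walk\<close>

definition walks :: "'a set \<Rightarrow> nat \<Rightarrow> 'a list set" where
  "walks T n = {xs. set xs \<subseteq> T \<and> length xs = n}"

lemma finite_walks: "finite T \<Longrightarrow> finite (walks T n)"
  unfolding walks_def by (rule finite_lists_length_eq)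

lemma card_walks: "finite T \<Longrightarrow> card (walks T n) = card T ^ n"
  unfolding walks_def by (rule card_lists_length_eq)

lemma markov_op_power_eq:
  fixes T :: "'a::group_add set"
  assumes "finite T"
  shows "(markov_op T ^^ n) g x = 1 / of_nat (card T ^ n) * (\<Sum>xs\<in>walks T n. g (- sum_list xs + x))"
proof (induction n arbitrary: x)
  case 0
  have "walks T 0 = {[]}" by (auto simp: walks_def)
  then show ?case by simp
next
  case (Suc n)
  have inj: "inj_on (\<lambda>(xs, s). s # xs) (walks T n \<times> T)" by (auto simp: inj_on_def)
  have walks_Suc: "walks T (Suc n) = (\<lambda>(xs, s). s # xs) ` (walks T n \<times> T)"
    unfolding walks_def by (rule lists_length_Suc_eq)
  have "(\<Sum>xs\<in>walks T (Suc n). g (- sum_list xs + x))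
      = (\<Sum>(xs, s)\<in>walks T n \<times> T. g (- sum_list (s # xs) + x))"
    unfolding walks_Suc by (subst sum.reindex[OF inj]) (simp add: case_prod_beta)
  also have "\<dots> = (\<Sum>(xs, s)\<in>walks T n \<times> T. g (- sum_list xs + (- s + x)))"
    by (rule sum.cong) (auto simp only: sum_list.Cons minus_add add.assoc)
  also have "\<dots> = (\<Sum>s\<in>T. \<Sum>xs\<in>walks T n. g (- sum_list xs + (- s + x)))"
    by (simp add: sum.cartesian_product[symmetric] sum.swap[of _ T])
  finally have split: "(\<Sum>xs\<in>walks T (Suc n). g (- sum_list xs + x))
      = (\<Sum>s\<in>T. \<Sum>xs\<in>walks T n. g (- sum_list xs + (- s + x)))" .
  have "(markov_op T ^^ Suc n) g x = 1 / of_nat (card T) * (\<Sum>s\<in>T. (markov_op T ^^ n) g (- s + x))"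
    by (simp add: markov_op_def[of T "(markov_op T ^^ n) g"])
  then show ?case unfolding Suc split by (simp add: sum_distrib_left)
qed

definition walk_count :: "'a::group_add set \<Rightarrow> nat \<Rightarrow> 'a \<Rightarrow> nat" where
  "walk_count T n v = card {xs \<in> walks T n. sum_list xs = v}"

definition walk_prob :: "'a::group_add set \<Rightarrow> nat \<Rightarrow> 'a \<Rightarrow> real" where
  "walk_prob T n v = real (walk_count T n v) / real (card T ^ n)"

definition walk_support :: "'a::group_add set \<Rightarrow> nat \<Rightarrow> 'a set" where
  "walk_support T n = sum_list ` walks T n"

lemma finite_walk_support: "finite T \<Longrightarrow> finite (walk_support T n)"
  unfolding walk_support_def using finite_walks by blast

lemma card_walk_support_le: "finite T \<Longrightarrow> card (walk_support T n) \<le> card T ^ n"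
  unfolding walk_support_def using card_walks card_image_le finite_walks by metis

lemma walk_support_iff:
  "finite T \<Longrightarrow> v \<in> walk_support T n \<longleftrightarrow> 0 < walk_count T n v"
  using finite_walks[of T n]
  by (auto simp: walk_support_def walk_count_def card_gt_0_iff)

lemma sum_walks_eq_sum_walk_support:
  fixes T :: "'a::group_add set" and h :: "'a \<Rightarrow> real"
  assumes "finite T"
  shows "(\<Sum>xs\<in>walks T n. h (sum_list xs)) = (\<Sum>v\<in>walk_support T n. real (walk_count T n v) * h v)"
proof -
  have "(\<Sum>xs\<in>walks T n. h (sum_list xs))
      = (\<Sum>v\<in>walk_support T n. \<Sum>xs\<in>{xs \<in> walks T n. sum_list xs = v}. h (sum_list xs))"
    by (rule sum.group[symmetric])
      (auto simp: walk_support_def finite_walks finite_walk_support assms)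
  also have "\<dots> = (\<Sum>v\<in>walk_support T n. real (walk_count T n v) * h v)"
    by (rule sum.cong) (auto simp: walk_count_def)
  finally show ?thesis .
qed

lemma sum_walk_prob:
  fixes T :: "'a::group_add set"
  assumes "finite T" "T \<noteq> {}"
  shows "(\<Sum>v\<in>walk_support T n. walk_prob T n v) = 1"
proof -
  have "(\<Sum>v\<in>walk_support T n. real (walk_count T n v)) = real (card T ^ n)"
    using sum_walks_eq_sum_walk_support[OF assms(1), where h="\<lambda>_. 1" and n=n]
    by (simp add: card_walks[OF assms(1)])
  then show ?thesis
    using assms by (simp add: walk_prob_def card_gt_0_iff flip: sum_divide_distrib)
qed

lemma walk_count_le: "finite T \<Longrightarrow> walk_count T n v \<le> card T ^ n"
  unfolding walk_count_def by (metis (no_types, lifting) card_walks finite_walks card_mono mem_Collect_eq subsetI)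

lemma walk_prob_nonneg: "0 \<le> walk_prob T n v"
  by (simp add: walk_prob_def)

lemma walk_prob_le_1: "finite T \<Longrightarrow> T \<noteq> {} \<Longrightarrow> walk_prob T n v \<le> 1"
  unfolding walk_prob_def using walk_count_le[of T n v] by (simp add: card_gt_0_iff divide_le_eq_1)

lemma walk_prob_ge:
  fixes T :: "'a::group_add set"
  assumes "finite T" "v \<in> walk_support T n"
  shows "1 / real (card T ^ n) \<le> walk_prob T n v"
  using assms walk_support_iff[OF assms(1)] by (simp add: walk_prob_def divide_right_mono)

text \<open>Reversing and negating a walk maps the walks ending at -v injectively onto those ending at v.\<close>
lemma walk_count_uminus_le:
  fixes T :: "'a::group_add set"
  assumes "finite T" "uminus ` T = T"
  shows "walk_count T n (- v) \<le> walk_count T n v"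
proof -
  define W where "W = {xs \<in> walks T n. sum_list xs = v}"
  define reflect :: "'a list \<Rightarrow> 'a list" where "reflect = (\<lambda>xs. rev (map uminus xs))"
  have reflect_reflect: "reflect (reflect xs) = xs" for xs by (simp add: reflect_def rev_map)
  have sum_reflect: "sum_list (reflect xs) = - sum_list xs" for xs
    by (induction xs) (auto simp: reflect_def minus_add)
  have reflect_mem: "reflect ys \<in> W" if ys: "ys \<in> walks T n" "sum_list ys = - v" for ys
  proof -
    have "set (reflect ys) = uminus ` set ys" by (simp add: reflect_def)
    also have "\<dots> \<subseteq> uminus ` T" using ys(1) by (intro image_mono) (simp add: walks_def)
    finally have "set (reflect ys) \<subseteq> T" using assms(2) by simp
    moreover have "length (reflect ys) = n" using ys(1) by (simp add: reflect_def walks_def)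
    ultimately show ?thesis using ys(2) by (simp add: W_def walks_def sum_reflect)
  qed
  have "{xs \<in> walks T n. sum_list xs = - v} \<subseteq> reflect ` W"
  proof
    fix ys assume "ys \<in> {xs \<in> walks T n. sum_list xs = - v}"
    then have "reflect ys \<in> W" by (intro reflect_mem) auto
    then show "ys \<in> reflect ` W" by (rule image_eqI[rotated]) (simp add: reflect_reflect)
  qed
  moreover have "finite W" using finite_walks[OF assms(1)] by (simp add: W_def)
  ultimately have "walk_count T n (- v) \<le> card (reflect ` W)"
    unfolding walk_count_def by (intro card_mono finite_imageI)
  also have "\<dots> \<le> walk_count T n v"
    using card_image_le[OF \<open>finite W\<close>, of reflect] by (simp add: walk_count_def W_def)
  finally show ?thesis .
qed

lemma walk_prob_uminus:
  fixes T :: "'a::group_add set"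
  assumes "finite T" "uminus ` T = T"
  shows "walk_prob T n (- v) = walk_prob T n v"
  using walk_count_uminus_le[OF assms, of n v] walk_count_uminus_le[OF assms, of n "- v"]
  by (simp add: walk_prob_def)

lemma uminus_mem_walk_support:
  fixes T :: "'a::group_add set"
  assumes "finite T" "uminus ` T = T" "v \<in> walk_support T n"
  shows "- v \<in> walk_support T n"
  using assms walk_count_uminus_le[OF assms(1,2), of n "- v"] walk_support_iff[OF assms(1)] by force

lemma norm_markov_op_power_abs_fun:
  fixes T :: "'a::group_add set" and f :: "'a \<Rightarrow> complex"
  assumes "finite T"
  shows "cmod ((markov_op T ^^ n) (abs_fun f) x)
         = (\<Sum>v\<in>walk_support T n. walk_prob T n v * cmod (f (- v + x)))"
proof -
  have "(markov_op T ^^ n) (abs_fun f) x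
      = complex_of_real ((\<Sum>xs\<in>walks T n. cmod (f (- sum_list xs + x))) / real (card T ^ n))"
    by (simp add: markov_op_power_eq[OF assms] abs_fun_def)
  also have "\<dots> = complex_of_real (\<Sum>v\<in>walk_support T n. walk_prob T n v * cmod (f (- v + x)))"
    by (simp add: sum_walks_eq_sum_walk_support[OF assms, where h="\<lambda>v. cmod (f (- v + x))"]
        sum_divide_distrib walk_prob_def)
  finally have "cmod ((markov_op T ^^ n) (abs_fun f) x)
      = \<bar>\<Sum>v\<in>walk_support T n. walk_prob T n v * cmod (f (- v + x))\<bar>"
    by (simp only: norm_of_real)
  moreover have "0 \<le> (\<Sum>v\<in>walk_support T n. walk_prob T n v * cmod (f (- v + x)))"
    by (intro sum_nonneg mult_nonneg_nonneg walk_prob_nonneg) simp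
  ultimately show ?thesis by simp
qed

lemma sum_translates_le_markov_op_power:
  fixes T :: "'a::group_add set" and f :: "'a \<Rightarrow> complex"
  assumes "finite T" "L \<subseteq> walk_support T n" "0 < t" "\<And>v. v \<in> L \<Longrightarrow> t < walk_prob T n v"
  shows "(\<Sum>v\<in>L. cmod (f (- v + x))) \<le> 1 / t * cmod ((markov_op T ^^ n) (abs_fun f) x)"
proof -
  have "t * (\<Sum>v\<in>L. cmod (f (- v + x))) \<le> (\<Sum>v\<in>L. walk_prob T n v * cmod (f (- v + x)))"
    unfolding sum_distrib_left by (intro sum_mono mult_right_mono) (auto intro: less_imp_le assms(4))
  also have "\<dots> \<le> (\<Sum>v\<in>walk_support T n. walk_prob T n v * cmod (f (- v + x)))"
    by (rule sum_mono2[OF finite_walk_support[OF assms(1)] assms(2)]) (simp add: walk_prob_nonneg)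
  also have "\<dots> = cmod ((markov_op T ^^ n) (abs_fun f) x)"
    by (rule norm_markov_op_power_abs_fun[OF assms(1), symmetric])
  finally show ?thesis using assms(3) by (simp add: field_simps)
qed

definition prob_level :: "'a::group_add set \<Rightarrow> nat \<Rightarrow> nat \<Rightarrow> 'a set" where
  "prob_level T n k = {v \<in> walk_support T n. 1 / 2 ^ (k + 1) < walk_prob T n v \<and> walk_prob T n v \<le> 1 / 2 ^ k}"

subsection \<open>Heavy level sets\<close>

lemma prob_level_subset: "prob_level T n k \<subseteq> walk_support T n"
  by (auto simp: prob_level_def)

lemma uminus_prob_level:
  fixes T :: "'a::group_add set"
  assumes "finite T" "uminus ` T = T"
  shows "uminus ` prob_level T n k = prob_level T n k"
proof -
  have neg: "- v \<in> prob_level T n k" if "v \<in> prob_level T n k" for v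
    using that uminus_mem_walk_support[OF assms] walk_prob_uminus[OF assms] by (auto simp: prob_level_def)
  show ?thesis using neg by (auto intro: image_eqI[where x="- v" for v] simp: image_subset_iff)
qed

lemma real_power_less_two_power: "real (m ^ n) < 2 ^ (n * m + 1)"
proof -
  have "m ^ n \<le> (2 ^ m) ^ n" by (simp add: power_mono less_imp_le[OF less_exp])
  also have "\<dots> < 2 ^ (n * m + 1)" by (simp add: power_mult[symmetric] mult.commute)
  finally show ?thesis by (metis of_nat_less_iff of_nat_numeral of_nat_power)
qed

text \<open>Walk probabilities on the support are at least card T ^ - n, so only the levels
  k \<le> n * card T are occupied.\<close>
lemma prob_level_exists:
  fixes T :: "'a::group_add set"
  assumes "finite T" "T \<noteq> {}" "v \<in> walk_support T n"
  shows "\<exists>k \<le> n * card T. v \<in> prob_level T n k"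
proof -
  define P where "P = (\<lambda>k::nat. 1 / 2 ^ (k + 1) < walk_prob T n v)"
  have "1 / 2 ^ (n * card T + 1) < 1 / real (card T ^ n)"
    using real_power_less_two_power[of "card T" n] assms(1,2) by (simp add: card_gt_0_iff frac_less2)
  also have "\<dots> \<le> walk_prob T n v" by (rule walk_prob_ge[OF assms(1,3)])
  finally have P_max: "P (n * card T)" by (simp add: P_def)
  define k where "k = (LEAST k. P k)"
  have "walk_prob T n v \<le> 1 / 2 ^ k"
  proof (cases k)
    case 0
    then show ?thesis using walk_prob_le_1[OF assms(1,2)] by simp
  next
    case (Suc j)
    then have "\<not> P j" using not_less_Least[of j P] k_def by simp
    then show ?thesis using Suc by (simp add: P_def)
  qed
  moreover have "P k" "k \<le> n * card T"
    unfolding k_def by (rule LeastI[of P, OF P_max], rule Least_le[of P, OF P_max])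
  ultimately show ?thesis using assms(3) by (auto simp: prob_level_def P_def)
qed

text \<open>Pigeonhole: level k carries mass at most card (level k) / 2 ^ k, and at most n * card T + 1
  levels are occupied.\<close>
lemma prob_level_heavy:
  fixes T :: "'a::group_add set"
  assumes "finite T" "T \<noteq> {}"
  shows "\<exists>k. 1 / real (n * card T + 1) \<le> real (card (prob_level T n k)) / 2 ^ k"
proof (rule ccontr)
  define K where "K = n * card T"
  assume "\<nexists>k. 1 / real (n * card T + 1) \<le> real (card (prob_level T n k)) / 2 ^ k"
  then have light: "real (card (prob_level T n k)) / 2 ^ k < 1 / real (K + 1)" for k
    by (simp add: K_def not_le)
  have "1 = (\<Sum>v\<in>walk_support T n. walk_prob T n v)" using sum_walk_prob[OF assms] by simp
  also have "\<dots> \<le> (\<Sum>v\<in>walk_support T n. \<Sum>k\<le>K. if v \<in> prob_level T n k then 1 / 2 ^ k else 0)"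
  proof (rule sum_mono)
    fix v assume "v \<in> walk_support T n"
    then obtain k where k: "k \<le> K" "v \<in> prob_level T n k"
      using prob_level_exists[OF assms] K_def by blast
    then have "walk_prob T n v \<le> (if v \<in> prob_level T n k then 1 / 2 ^ k else 0)"
      by (simp add: prob_level_def)
    also have "\<dots> \<le> (\<Sum>k\<le>K. if v \<in> prob_level T n k then 1 / 2 ^ k else 0)"
      by (rule member_le_sum[where f="\<lambda>k. if v \<in> prob_level T n k then 1 / 2 ^ k else (0::real)"])
        (use k in auto)
    finally show "walk_prob T n v \<le> (\<Sum>k\<le>K. if v \<in> prob_level T n k then 1 / 2 ^ k else 0)" .
  qed
  also have "\<dots> = (\<Sum>k\<le>K. real (card (prob_level T n k)) / 2 ^ k)"
    using finite_walk_support[OF assms(1)] prob_level_subset[of T n]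
    by (subst sum.swap) (simp add: sum.If_cases Int_absorb1)
  also have "\<dots> < (\<Sum>k\<le>K. 1 / real (K + 1))"
    by (rule sum_strict_mono) (use light in auto)
  also have "\<dots> = 1" by simp
  finally show False by simp
qed

text \<open>The indicator of a set L of walk endpoints with probability above t is dominated by
  t\<inverse> times the walk distribution, so its norm is controlled by spec_rho T ^ n.\<close>
lemma sqrt_card_le_spec_rho_power:
  fixes T :: "'a::group_add set"
  assumes "finite T" "L \<subseteq> walk_support T n" "0 < t" "\<And>v. v \<in> L \<Longrightarrow> t < walk_prob T n v"
  shows "sqrt (real (card L)) \<le> spec_rho T ^ n / t"
proof -
  have L: "finite L" using finite_subset[OF assms(2) finite_walk_support[OF assms(1)]] .
  have bounded: "l2_bounded (markov_op T ^^ n) (spec_rho T ^ n)"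
    by (rule l2_bounded_markov_op_power[OF assms(1)])
  have delta: "in_l2 (indicator {0} :: 'a \<Rightarrow> complex)" "l2_norm (indicator {0} :: 'a \<Rightarrow> complex) \<le> 1"
    using l2_norm_indicator_zero by auto
  have image: "in_l2 ((markov_op T ^^ n) (indicator {0}))"
    "l2_norm ((markov_op T ^^ n) (indicator {0})) \<le> spec_rho T ^ n"
    using l2_boundedD[OF bounded delta(1)]
      mult_left_le[OF delta(2) zero_le_power[OF spec_rho_nonneg[OF assms(1)]], of n]
    by auto
  have "cmod (indicator L x :: complex) \<le> 1 / t * cmod ((markov_op T ^^ n) (indicator {0}) x)" for x
  proof -
    have "cmod (indicator L x :: complex) \<le> (\<Sum>v\<in>L. cmod (indicator {0} (- v + x) :: complex))"
      unfolding sum_translated_indicator_zero[OF L, symmetric] by (rule norm_sum)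
    also have "\<dots> \<le> 1 / t * cmod ((markov_op T ^^ n) (abs_fun (indicator {0})) x)"
      by (rule sum_translates_le_markov_op_power[OF assms])
    finally show ?thesis by simp
  qed
  then have "in_l2 (indicator L :: 'a \<Rightarrow> complex)
      \<and> l2_norm (indicator L :: 'a \<Rightarrow> complex) \<le> 1 / t * l2_norm ((markov_op T ^^ n) (indicator {0}))"
    using assms(3) by (intro l2_norm_le_if_dominated[OF image(1)]) auto
  moreover have "sqrt (real (card L)) * \<bar>1\<bar> \<le> l2_norm (indicator L :: 'a \<Rightarrow> complex)"
    using calculation by (intro sqrt_card_mult_le_l2_norm[OF L]) auto
  moreover have "1 / t * l2_norm ((markov_op T ^^ n) (indicator {0})) \<le> spec_rho T ^ n / t"
    using image(2) assms(3) by (simp add: divide_right_mono)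
  ultimately show ?thesis by simp
qed

lemma norm_markov_op_union_le:
  fixes T L S :: "'a::group_add set"
  assumes "finite T" "L \<subseteq> walk_support T n" "0 < t" "\<And>v. v \<in> L \<Longrightarrow> t < walk_prob T n v"
    and "finite S" "S \<noteq> {}"
  shows "cmod (markov_op (L \<union> S) f x)
    \<le> 1 / (real (card (L \<union> S)) * t) * cmod ((markov_op T ^^ n) (abs_fun f) x)
      + real (card S) / real (card (L \<union> S)) * cmod (markov_op S (abs_fun f) x)"
proof -
  have L: "finite L" using finite_subset[OF assms(2) finite_walk_support[OF assms(1)]] .
  have "(\<Sum>v\<in>L \<union> S. cmod (f (- v + x))) \<le> (\<Sum>v\<in>L. cmod (f (- v + x))) + (\<Sum>v\<in>S. cmod (f (- v + x)))"
    using sum_Un[OF L assms(5), of "\<lambda>v. cmod (f (- v + x))"] by (simp add: sum_nonneg)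
  also have "\<dots> \<le> 1 / t * cmod ((markov_op T ^^ n) (abs_fun f) x) + real (card S) * cmod (markov_op S (abs_fun f) x)"
  proof (rule add_mono)
    show "(\<Sum>v\<in>L. cmod (f (- v + x))) \<le> 1 / t * cmod ((markov_op T ^^ n) (abs_fun f) x)"
      by (rule sum_translates_le_markov_op_power[OF assms(1-4)])
    show "(\<Sum>v\<in>S. cmod (f (- v + x))) \<le> real (card S) * cmod (markov_op S (abs_fun f) x)"
      using assms(5,6) by (simp add: norm_markov_op_abs_fun)
  qed
  finally have sum_le: "(\<Sum>v\<in>L \<union> S. cmod (f (- v + x)))
      \<le> 1 / t * cmod ((markov_op T ^^ n) (abs_fun f) x) + real (card S) * cmod (markov_op S (abs_fun f) x)" .
  show ?thesis
    using order_trans[OF norm_markov_op_le divide_right_mono[OF sum_le]]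
    by (simp add: add_divide_distrib mult.commute)
qed

lemma spec_rho_union_le:
  fixes T L S :: "'a::group_add set"
  assumes T: "finite T"
    and L: "L \<subseteq> walk_support T n" "0 < t" "\<And>v. v \<in> L \<Longrightarrow> t < walk_prob T n v"
    and S: "finite S" "S \<noteq> {}"
  shows "spec_rho (L \<union> S) \<le> (spec_rho T ^ n / t + real (card S)) / real (card (L \<union> S))"
proof -
  define M where "M = real (card (L \<union> S))"
  have "finite L" using finite_subset[OF L(1) finite_walk_support[OF T]] .
  then have M: "0 < M" using S by (simp add: M_def card_gt_0_iff)
  have "l2_bounded (markov_op (L \<union> S)) ((spec_rho T ^ n / t + real (card S)) / M)"
    unfolding l2_bounded_def
  proof (intro allI impI)
    fix f :: "'a \<Rightarrow> complex" assume f: "in_l2 f"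
    have g: "in_l2 (abs_fun f)" "l2_norm (abs_fun f) \<le> l2_norm f"
      using l2_norm_abs_fun_le[OF f] by auto
    have "in_l2 ((markov_op T ^^ n) (abs_fun f))
        \<and> l2_norm ((markov_op T ^^ n) (abs_fun f)) \<le> spec_rho T ^ n * l2_norm (abs_fun f)"
      by (rule l2_boundedD[OF l2_bounded_markov_op_power[OF T] g(1)])
    then have walk: "in_l2 ((markov_op T ^^ n) (abs_fun f))"
      "l2_norm ((markov_op T ^^ n) (abs_fun f)) \<le> spec_rho T ^ n * l2_norm f"
      using mult_left_mono[OF g(2) zero_le_power[OF spec_rho_nonneg[OF T]], of n] by linarith+
    have step: "in_l2 (markov_op S (abs_fun f))" "l2_norm (markov_op S (abs_fun f)) \<le> l2_norm f"
      using l2_boundedD[OF l2_bounded_markov_op_1[OF S(1)] g(1)] g(2) by auto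
    have "in_l2 (markov_op (L \<union> S) f) \<and> l2_norm (markov_op (L \<union> S) f)
        \<le> 1 / (M * t) * l2_norm ((markov_op T ^^ n) (abs_fun f))
          + real (card S) / M * l2_norm (markov_op S (abs_fun f))"
      using M L(2) norm_markov_op_union_le[OF T L S]
      by (intro l2_norm_le_if_dominated2[OF walk(1) step(1)]) (auto simp: M_def)
    moreover have "1 / (M * t) * l2_norm ((markov_op T ^^ n) (abs_fun f))
          + real (card S) / M * l2_norm (markov_op S (abs_fun f))
        \<le> 1 / (M * t) * (spec_rho T ^ n * l2_norm f) + real (card S) / M * l2_norm f"
      using walk(2) step(2) M L(2) by (intro add_mono mult_left_mono) auto
    moreover have "1 / (M * t) * (spec_rho T ^ n * l2_norm f) + real (card S) / M * l2_norm f
        = (spec_rho T ^ n / t + real (card S)) / M * l2_norm f"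
      using M L(2) by (simp add: field_simps)
    ultimately show "in_l2 (markov_op (L \<union> S) f) \<and> l2_norm (markov_op (L \<union> S) f)
        \<le> (spec_rho T ^ n / t + real (card S)) / M * l2_norm f"
      by linarith
  qed
  moreover have "0 \<le> (spec_rho T ^ n / t + real (card S)) / M"
    using M L(2) spec_rho_nonneg[OF T] by simp
  ultimately show ?thesis unfolding spec_rho_eq_l2_opnorm M_def by (rule l2_opnorm_le)
qed

text \<open>With 1/t \<le> 2 K l the hypothesis sqrt l \<le> P/t forces 1/l \<le> 4 K^2 P^2.\<close>
lemma heavy_level_arith:
  fixes P t l K s :: real
  assumes P: "0 \<le> P" "P \<le> 1" and t: "0 < t" and l: "0 < l" and K: "1 \<le> K" and s: "0 \<le> s"
    and heavy: "1 / (2 * K) \<le> t * l" and norm: "sqrt l \<le> P / t"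
  shows "(P / t + s) / l \<le> P * (2 + 4 * s) * K\<^sup>2"
proof -
  have inv_t: "1 / t \<le> 2 * K * l" using heavy t K by (simp add: field_simps)
  have P_t: "P / t \<le> 2 * K * l * P" using mult_left_mono[OF inv_t P(1)] by (simp add: mult_ac)
  have "sqrt l * (2 * K * sqrt l * P) = 2 * K * (sqrt l * sqrt l) * P" by (simp only: mult_ac)
  also have "\<dots> = 2 * K * l * P" using l by simp
  finally have "sqrt l * 1 \<le> sqrt l * (2 * K * sqrt l * P)" using norm P_t by linarith
  then have "1 \<le> 2 * K * sqrt l * P" using l by simp
  then have "1 \<le> (2 * K * sqrt l * P)\<^sup>2" by (rule one_le_power)
  also have "\<dots> = 4 * K\<^sup>2 * P\<^sup>2 * l" using l by (simp add: power_mult_distrib)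
  finally have inv_l: "1 / l \<le> 4 * K\<^sup>2 * P\<^sup>2" using l by (simp add: field_simps)
  have "(P / t + s) / l = P / t * (1 / l) + s * (1 / l)" using t l by (simp add: field_simps)
  also have "\<dots> \<le> 2 * K * P + s * (4 * K\<^sup>2 * P\<^sup>2)"
  proof (rule add_mono)
    show "P / t * (1 / l) \<le> 2 * K * P"
      using mult_right_mono[OF P_t, of "1 / l"] l by simp
    show "s * (1 / l) \<le> s * (4 * K\<^sup>2 * P\<^sup>2)" using inv_l s by (rule mult_left_mono)
  qed
  also have "\<dots> \<le> 2 * K\<^sup>2 * P + s * (4 * K\<^sup>2 * P)"
  proof (rule add_mono)
    have "K \<le> K\<^sup>2" using K by (simp add: power2_eq_square)
    then show "2 * K * P \<le> 2 * K\<^sup>2 * P" using P by (simp add: mult_right_mono)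
    have "P\<^sup>2 \<le> P" using P by (simp add: power2_eq_square mult_left_le)
    then show "s * (4 * K\<^sup>2 * P\<^sup>2) \<le> s * (4 * K\<^sup>2 * P)" using s by (intro mult_left_mono) auto
  qed
  also have "\<dots> = P * (2 + 4 * s) * K\<^sup>2" by (simp add: algebra_simps)
  finally show ?thesis .
qed

lemma obtain_heavy_level:
  fixes T :: "'a::group_add set"
  assumes "finite T" "T \<noteq> {}" "uminus ` T = T"
  obtains L t where "L \<subseteq> walk_support T n" "uminus ` L = L" "0 < t" "\<And>v. v \<in> L \<Longrightarrow> t < walk_prob T n v"
    "1 / (2 * real (n * card T + 1)) \<le> t * real (card L)"
proof -
  obtain k where k: "1 / real (n * card T + 1) \<le> real (card (prob_level T n k)) / 2 ^ k"
    using prob_level_heavy[OF assms(1,2)] by blast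
  have halve: "1 / (2 * real (n * card T + 1)) = 1 / real (n * card T + 1) / 2"
    "1 / 2 ^ (k + 1) * real (card (prob_level T n k)) = real (card (prob_level T n k)) / 2 ^ k / 2"
    by simp_all
  show thesis
  proof (rule that[of "prob_level T n k" "1 / 2 ^ (k + 1)"])
    show "prob_level T n k \<subseteq> walk_support T n" by (rule prob_level_subset)
    show "uminus ` prob_level T n k = prob_level T n k" by (rule uminus_prob_level[OF assms(1,3)])
    show "1 / 2 ^ (k + 1) < walk_prob T n v" if "v \<in> prob_level T n k" for v
      using that by (simp add: prob_level_def)
    show "1 / (2 * real (n * card T + 1)) \<le> 1 / 2 ^ (k + 1) * real (card (prob_level T n k))"
      unfolding halve using divide_right_mono[OF k, of 2] by simp
  qed simp
qed

lemma exists_superset_small_spec_rho: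
  fixes T S :: "'a::group_add set"
  assumes T: "finite T" "T \<noteq> {}" "uminus ` T = T"
    and S: "finite S" "S \<noteq> {}" "uminus ` S = S" and n: "1 \<le> n"
  shows "\<exists>S'. finite_symmetric S' \<and> S \<subseteq> S'
    \<and> real (card S') \<le> (real (card S) + 1) * real (card T) ^ n
    \<and> spec_rho S' \<le> spec_rho T ^ n * ((2 + 4 * real (card S)) * 4 * real (card T) ^ 2) * real n ^ 2"
proof -
  obtain L t where L: "L \<subseteq> walk_support T n" "uminus ` L = L" "0 < t"
      "\<And>v. v \<in> L \<Longrightarrow> t < walk_prob T n v"
    and heavy: "1 / (2 * real (n * card T + 1)) \<le> t * real (card L)"
    using obtain_heavy_level[OF T, where n=n] by metis
  define m s K where "m = real (card T)" and "s = real (card S)" and "K = real (n * card T + 1)"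
  have m: "1 \<le> m" using T(1,2) by (simp add: m_def Suc_le_eq card_gt_0_iff)
  have finite_L: "finite L" using finite_subset[OF L(1) finite_walk_support[OF T(1)]] .
  have "0 < real (n * card T + 1)" by (simp only: of_nat_0_less_iff zero_less_Suc add_Suc_right add_0_right)
  then have "0 < 1 / (2 * real (n * card T + 1))" by simp
  then have "0 < t * real (card L)" using heavy by linarith
  then have card_L_pos: "0 < real (card L)" using L(3) by (simp add: zero_less_mult_iff)
  have card_L: "real (card L) \<le> m ^ n"
    using card_mono[OF finite_walk_support[OF T(1)] L(1)] card_walk_support_le[OF T(1), of n]
    by (simp add: m_def flip: of_nat_power)
  have card_L_le: "real (card L) \<le> real (card (L \<union> S))"
    using card_mono[OF finite_UnI[OF finite_L S(1)], of L] by simp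
  have rho_T: "0 \<le> spec_rho T ^ n" "spec_rho T ^ n \<le> 1"
    using spec_rho_nonneg[OF T(1)] spec_rho_le_1[OF T(1)] by (simp_all add: power_le_one)
  have "spec_rho (L \<union> S) \<le> (spec_rho T ^ n / t + s) / real (card (L \<union> S))"
    unfolding s_def by (rule spec_rho_union_le[OF T(1) L(1) L(3) L(4) S(1,2)])
  also have "\<dots> \<le> (spec_rho T ^ n / t + s) / real (card L)"
    using card_L_le card_L_pos rho_T(1) L(3) by (intro divide_left_mono) (simp_all add: s_def)
  also have "\<dots> \<le> spec_rho T ^ n * (2 + 4 * s) * K\<^sup>2"
  proof (rule heavy_level_arith[OF rho_T L(3) card_L_pos])
    show "sqrt (real (card L)) \<le> spec_rho T ^ n / t"
      by (rule sqrt_card_le_spec_rho_power[OF T(1) L(1) L(3) L(4)])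
  qed (use heavy in \<open>simp_all add: s_def K_def\<close>)
  also have "\<dots> \<le> spec_rho T ^ n * (2 + 4 * s) * (4 * m ^ 2 * real n ^ 2)"
  proof (rule mult_left_mono)
    have "n * card T + 1 \<le> 2 * n * card T" using n T(1,2) by (simp add: card_gt_0_iff Suc_le_eq)
    then have "K \<le> 2 * real n * m" unfolding K_def m_def by (metis of_nat_le_iff of_nat_mult of_nat_numeral)
    then have "K\<^sup>2 \<le> (2 * real n * m)\<^sup>2" by (rule power_mono) (simp add: K_def)
    then show "K\<^sup>2 \<le> 4 * m ^ 2 * real n ^ 2" by (simp add: power_mult_distrib mult_ac)
  qed (use rho_T(1) in \<open>simp add: s_def\<close>)
  finally have rho: "spec_rho (L \<union> S) \<le> spec_rho T ^ n * ((2 + 4 * s) * 4 * m ^ 2) * real n ^ 2"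
    by (simp only: mult_ac)
  have "real (card (L \<union> S)) \<le> real (card L) + s" using card_Un_le[of L S] by (simp add: s_def)
  also have "\<dots> \<le> m ^ n + s * m ^ n"
    using card_L mult_left_mono[OF one_le_power[OF m, of n], of s] by (simp add: s_def)
  also have "\<dots> = (s + 1) * m ^ n" by (simp add: algebra_simps)
  finally have card: "real (card (L \<union> S)) \<le> (s + 1) * m ^ n" .
  have "finite_symmetric (L \<union> S)"
    using finite_L S(1,3) L(2) by (simp add: finite_symmetric_def image_Un)
  with S(1) rho card show ?thesis unfolding s_def m_def by (intro exI[of _ "L \<union> S"]) simp
qed

subsection \<open>Passing to the liminf\<close>

lemma rho_exponent_fun_le_ln_ratio:
  fixes S :: "'a::group_add set"
  assumes "finite S" "2 \<le> card S" "spec_rho S \<le> R" "real (card S) \<le> N" "ln R < 0"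
  shows "rho_exponent_fun S \<le> ln R / ln N"
proof -
  have "S \<noteq> {}" using assms(2) by auto
  then have rho: "0 < spec_rho S" by (rule spec_rho_pos[OF assms(1)])
  have card: "0 < ln (real (card S))" using assms(2) by simp
  have "rho_exponent_fun S \<le> ln R / ln (real (card S))"
    unfolding rho_exponent_fun_def using rho assms(3) card by (simp add: divide_right_mono)
  also have "\<dots> \<le> ln R / ln N"
    using assms(2,4,5) card by (intro divide_left_mono_neg) auto
  finally show ?thesis .
qed

lemma eventually_ln_ratio_less:
  fixes a b c d e :: real
  assumes "a < 0" "0 < b" "0 < e"
  shows "eventually (\<lambda>n::nat. real n * a + c + 2 * ln (real n) < 0
    \<and> (real n * a + c + 2 * ln (real n)) / (real n * b + d) < a / b + e) sequentially"
proof -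
  have "(\<lambda>n::nat. (real n * a + c + 2 * ln (real n)) / (real n * b + d)) \<longlonglongrightarrow> a * inverse b"
    using assms by real_asymp
  then have "eventually (\<lambda>n::nat. (real n * a + c + 2 * ln (real n)) / (real n * b + d) < a / b + e) sequentially"
    using assms(3) by (intro order_tendstoD) (auto simp: divide_inverse)
  moreover have "eventually (\<lambda>n::nat. real n * a + c + 2 * ln (real n) < 0) sequentially"
    using assms(1) by real_asymp
  ultimately show ?thesis by eventually_elim auto
qed

lemma exists_superset_rho_exponent_le:
  fixes S T :: "'a::group_add set"
  assumes S: "finite_symmetric S" "2 \<le> card S" and T: "finite_symmetric T" "2 \<le> card T" and e: "0 < e"
  shows "\<exists>S'. finite_symmetric S' \<and> S \<subseteq> S' \<and> rho_exponent_fun S' \<le> rho_exponent_fun T + e"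
proof -
  have S': "finite S" "S \<noteq> {}" "uminus ` S = S" and T': "finite T" "T \<noteq> {}" "uminus ` T = T"
    using S T by (auto simp: finite_symmetric_def)
  show ?thesis
  proof (cases "spec_rho T < 1")
    case False
    then have "rho_exponent_fun T = 0" using spec_rho_le_1[OF T'(1)] by (simp add: rho_exponent_fun_def)
    then show ?thesis using S rho_exponent_fun_bounds[OF S'(1)] e by auto
  next
    case True
    define rho m s C where "rho = spec_rho T" and "m = real (card T)" and "s = real (card S)"
      and "C = (2 + 4 * s) * 4 * m ^ 2"
    have rho: "0 < rho" "ln rho < 0" using True spec_rho_pos[OF T'(1,2)] by (simp_all add: rho_def)
    have m: "0 < ln m" using T(2) by (simp add: m_def)
    have C: "0 < C" using T(2) by (simp add: C_def s_def m_def add_pos_nonneg)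
    obtain n where n: "1 \<le> n" and neg: "real n * ln rho + ln C + 2 * ln (real n) < 0"
      and ratio: "(real n * ln rho + ln C + 2 * ln (real n)) / (real n * ln m + ln (s + 1))
        < ln rho / ln m + e"
      using eventually_happens'[OF sequentially_bot,
          OF eventually_conj[OF eventually_ln_ratio_less[OF rho(2) m e] eventually_ge_at_top[of 1]]]
      by blast
    obtain S' where S'': "finite_symmetric S'" "S \<subseteq> S'"
      and card: "real (card S') \<le> (s + 1) * m ^ n"
      and spec: "spec_rho S' \<le> rho ^ n * C * real n ^ 2"
      using exists_superset_small_spec_rho[OF T' S' n] unfolding rho_def m_def s_def C_def by blast
    have "2 \<le> card S'"
      using S''(1,2) S(2) card_mono[of S' S] by (auto simp: finite_symmetric_def)
    moreover have "ln (rho ^ n * C * real n ^ 2) = real n * ln rho + ln C + 2 * ln (real n)"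
      using rho C n by (simp add: ln_mult ln_realpow)
    moreover have "ln ((s + 1) * m ^ n) = real n * ln m + ln (s + 1)"
      using T(2) by (simp add: ln_mult ln_realpow m_def s_def add_pos_nonneg)
    ultimately have "rho_exponent_fun S'
        \<le> (real n * ln rho + ln C + 2 * ln (real n)) / (real n * ln m + ln (s + 1))"
      using rho_exponent_fun_le_ln_ratio[OF _ _ spec card] S''(1) neg by (auto simp: finite_symmetric_def)
    moreover have "rho_exponent_fun T = ln rho / ln m" by (simp add: rho_exponent_fun_def rho_def m_def)
    ultimately show ?thesis using ratio S'' by (intro exI[of _ S']) auto
  qed
qed

lemma SUP_INF_superset_eq_INF:
  fixes f :: "'b set \<Rightarrow> real"
  assumes bdd: "\<And>S. P S \<Longrightarrow> c \<le> f S"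
    and Q: "Q \<subseteq> Collect P" "Q \<noteq> {}"
    and upward: "\<And>S S'. S \<in> Q \<Longrightarrow> P S' \<Longrightarrow> S \<subseteq> S' \<Longrightarrow> S' \<in> Q"
    and cofinal: "\<And>S. P S \<Longrightarrow> \<exists>S'\<in>Q. S \<subseteq> S'"
    and approx: "\<And>S T e. S \<in> Q \<Longrightarrow> T \<in> Q \<Longrightarrow> 0 < e
      \<Longrightarrow> \<exists>S'. P S' \<and> S \<subseteq> S' \<and> f S' \<le> f T + e"
  shows "(SUP S\<in>Collect P. INF S'\<in>{S'. P S' \<and> S \<subseteq> S'}. f S') = (INF S\<in>Q. f S)"
proof -
  define J where "J S = (INF S'\<in>{S'. P S' \<and> S \<subseteq> S'}. f S')" for S
  have bdd_Q: "bdd_below (f ` Q)" using bdd Q(1) by (intro bdd_belowI[where m=c]) auto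
  have J_le: "J S \<le> (INF S\<in>Q. f S)" if S: "P S" for S
  proof (rule cINF_greatest[OF Q(2)])
    fix T assume T: "T \<in> Q"
    obtain S\<^sub>1 where S\<^sub>1: "S\<^sub>1 \<in> Q" "S \<subseteq> S\<^sub>1" using cofinal[OF S] by blast
    show "J S \<le> f T"
    proof (rule field_le_epsilon)
      fix e :: real assume "0 < e"
      then obtain S' where S': "P S'" "S\<^sub>1 \<subseteq> S'" "f S' \<le> f T + e" using approx[OF S\<^sub>1(1) T] by blast
      have "J S \<le> f S'" unfolding J_def
        by (rule cINF_lower) (use bdd S' S\<^sub>1 in \<open>auto intro!: bdd_belowI[where m=c]\<close>)
      then show "J S \<le> f T + e" using S'(3) by simp
    qed
  qed
  obtain S\<^sub>0 where S\<^sub>0: "S\<^sub>0 \<in> Q" using Q(2) by blast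
  have le_J: "(INF S\<in>Q. f S) \<le> J S\<^sub>0" unfolding J_def
    by (rule cINF_greatest) (use S\<^sub>0 Q(1) upward in \<open>auto intro: cINF_lower[OF bdd_Q]\<close>)
  have "(SUP S\<in>Collect P. J S) = (INF S\<in>Q. f S)"
  proof (rule antisym)
    show "(SUP S\<in>Collect P. J S) \<le> (INF S\<in>Q. f S)"
      using S\<^sub>0 Q(1) J_le by (intro cSUP_least) auto
    show "(INF S\<in>Q. f S) \<le> (SUP S\<in>Collect P. J S)"
    proof (rule order_trans[OF le_J])
      show "J S\<^sub>0 \<le> (SUP S\<in>Collect P. J S)"
      proof (rule cSUP_upper)
        show "S\<^sub>0 \<in> Collect P" using S\<^sub>0 Q(1) by auto
        show "bdd_above (J ` Collect P)" using J_le by (intro bdd_aboveI[where M="INF S\<in>Q. f S"]) auto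
      qed
    qed
  qed
  then show ?thesis by (simp add: J_def)
qed

lemma exists_superset_card_ge_2:
  fixes x :: "'a::group_add" and S :: "'a set"
  assumes "x \<noteq> 0" "finite_symmetric S"
  shows "\<exists>S'. finite_symmetric S' \<and> 2 \<le> card S' \<and> S \<subseteq> S'"
proof (intro exI[of _ "S \<union> {0, x, - x}"] conjI)
  have "card {0, x} \<le> card (S \<union> {0, x, - x})"
    using assms(2) by (intro card_mono) (auto simp: finite_symmetric_def)
  then show "2 \<le> card (S \<union> {0, x, - x})" using assms(1) by simp
  show "finite_symmetric (S \<union> {0, x, - x})" using assms(2) by (auto simp: finite_symmetric_def)
qed auto

theorem theorem7p6:
  assumes "\<exists>x::'a::group_add. x \<noteq> 0"
  shows "r_Gamma TYPE('a) =
    - (INF S \<in> {S::'a set. finite_symmetric S \<and> card S \<ge> 2}.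
         ln (spec_rho S) / ln (real (card S)))"
proof -
  obtain x :: 'a where x: "x \<noteq> 0" using assms by blast
  define Q where "Q = {S::'a set. finite_symmetric S \<and> card S \<ge> 2}"
  have cofinal: "\<exists>S'\<in>Q. S \<subseteq> S'" if "finite_symmetric S" for S
    using exists_superset_card_ge_2[OF x that] by (auto simp: Q_def)
  have "(SUP S\<in>{S::'a set. finite_symmetric S}.
          INF S'\<in>{S'. finite_symmetric S' \<and> S \<subseteq> S'}. rho_exponent_fun S')
      = (INF S\<in>Q. rho_exponent_fun S)"
  proof (rule SUP_INF_superset_eq_INF)
    show "- 1/2 \<le> rho_exponent_fun S" if "finite_symmetric S" for S
      using rho_exponent_fun_bounds that by (auto simp: finite_symmetric_def)
    show "Q \<noteq> {}" using cofinal[of "{}"] by (auto simp: finite_symmetric_def)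
    show "Q \<subseteq> {S. finite_symmetric S}" by (auto simp: Q_def)
    show "S' \<in> Q" if "S \<in> Q" "finite_symmetric S'" "S \<subseteq> S'" for S S'
      using that card_mono[of S' S] by (auto simp: Q_def finite_symmetric_def)
    show "\<exists>S'. finite_symmetric S' \<and> S \<subseteq> S' \<and> rho_exponent_fun S' \<le> rho_exponent_fun T + e"
      if "S \<in> Q" "T \<in> Q" "0 < e" for S T and e :: real
      using that by (intro exists_superset_rho_exponent_le) (auto simp: Q_def)
  qed (fact cofinal)
  then show ?thesis by (simp add: r_Gamma_def Q_def rho_exponent_fun_def)
qed

end
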